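(* Assume (I), that $f(\cdot,i,\mathbf q)$ is $C^1$ on $[0,\infty)$ for all $i\in S$, $\mathbf q\in D_i$, that $f_t:=\partial_t f$ also satisfies (I), and that condition (R) holds. Then for any $i\in S$ and $Q,Q^*\in\mathcal Q$, as $\varepsilon\downarrow0$, $$F(i,Q^* )-F(i,Q\otimes_\varepsilon Q^* )=\big(\Gamma^{Q^*}_i(Q^*_i)-\Gamma^{Q^*}_i(Q_i)\big)\varepsilon+\tfrac12\big(\Lambda^{Q^*}(i,Q^* )-\Lambda^{Q^*}(i,Q)\big)\varepsilon^2+o(\varepsilon^2).$$
   Context: Let $S=\{1,\dots,N\}$, $N\in\mathbb N$. For $i\in S$ let $E_i=\{q\in\mathbb R^N: q_j\ge0\text{ for }j\ne i,\ q_i=-\sum_{j\ne i}q_j\}$ and $D_i\subseteq E_i$ given; $\mathcal Q=\{Q\in\mathbb R^{N\times N}: Q_i\in D_i\ \forall i\}$, $Q_i$ the $i$-th row. For $Q\in\mathcal Q$, $X$ is a time-homogeneous continuous-time Markov chain on $S$ with generator $Q$, $\mathbb E_{i,Q}$ the expectation given $X_0=i$. A payoff function $f$ assigns $f(t,i,\mathbf q)\in\mathbb R$ to $t\ge0,i\in S,\mathbf q\in D_i$. Condition (I) for a function $g$ of $(t,i,\mathbf q)$: $\int_0^\infty\sup_{i\in S,\mathbf q\in D_i,\|\mathbf q\|\le c}|g(t,i,\mathbf q)|dt<\infty$ for all $c>0$. Condition (R): there is a function $r(t,\varepsilon;i,\mathbf q)$, continuous in $\varepsilon$, with $|f(t+\varepsilon,i,\mathbf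 q)-f(t,i,\mathbf q)-\varepsilon f_t(t,i,\mathbf q)|\le r(t,\varepsilon;i,\mathbf q)$ for all $t\ge0,\varepsilon>0,i,\mathbf q$, such that $\int_0^\infty r(t,\varepsilon;i,\mathbf q)dt<\infty$ for all sufficiently small $\varepsilon>0$ and $\varepsilon\mapsto r(t,\varepsilon;i,\mathbf q)/\varepsilon$ is nondecreasing for every $(t,i,\mathbf q)$. Define $F(i,Q)=\mathbb E_{i,Q}[\int_0^\infty f(t,X_t,Q_{X_t})dt]$, $G(i,Q)=\mathbb E_{i,Q}[\int_0^\infty f_t(t,X_t,Q_{X_t})dt]$, $F(Q)=(F(1,Q),\dots,F(N,Q))$, $G(Q)=(G(1,Q),\dots,G(N,Q))$. $Q\otimes_\varepsilon Q'$: $X$ evolves with generator $Q$ on $[0,\varepsilon]$ and $Q'$ on $(\varepsilon,\infty)$; $F(i,Q\otimes_\varepsilon Q')$ is the corresponding expected payoff $\mathbb E_i[\int_0^\varepsilon f(t,X_t,Q_{X_t})dt+\int_\varepsilon^\infty f(t,X_t,Q'_{X_t})dt]$. For $Q^*\in\mathcal Q$: $\Gamma^{Q^*}_i(\mathbf q)=f(0,i,\mathbf q)+\mathbf q\cdot F(Q^* )$ for $\mathbf q\in D_i$; $\Gamma^{Q^*}(Q)=(\Gamma^{Q^*}_1(Q_1),\dots,\Gamma^{Q^*}_N(Q_N))$; $\Lambda^{Q^*}(i,Q)=f_t(0,i,Q_i)+Q_i\cdot\big(2G(Q^* )+\Gamma^{Q^*}(Q)\big)$. *)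

theory Defs
  imports "HOL-Analysis.Analysis" "HOL-Library.Landau_Symbols"
begin

text \<open>State space S = the finite type 'n (N = CARD('n)). A generator matrix
  Q :: real^'n^'n has rows Q $ i.\<close>

primrec mat_pow :: "real^'n^'n \<Rightarrow> nat \<Rightarrow> real^'n^'n" where
  "mat_pow A 0 = mat 1"
| "mat_pow A (Suc k) = A ** mat_pow A k"

text \<open>Matrix exponential exp(tQ): transition matrix of the CTMC with generator Q.\<close>
definition trans_mat :: "real^'n^'n \<Rightarrow> real \<Rightarrow> real^'n^'n" where
  "trans_mat Q t = (\<Sum>k. ((t ^ k) / fact k) *\<^sub>R mat_pow Q k)"

definition E_set :: "'n::finite \<Rightarrow> (real^'n) set" where
  "E_set i = {q. (\<forall>j. j \<noteq> i \<longrightarrow> q $ j \<ge> 0) \<and> q $ i = - (\<Sum>j\<in>UNIV - {i}. q $ j)}"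

definition admissible :: "('n \<Rightarrow> (real^'n) set) \<Rightarrow> real^'n^'n \<Rightarrow> bool" where
  "admissible D Q \<longleftrightarrow> (\<forall>i. Q $ i \<in> D i)"

definition cond_I :: "('n \<Rightarrow> (real^'n) set) \<Rightarrow> (real \<Rightarrow> 'n \<Rightarrow> real^'n \<Rightarrow> real) \<Rightarrow> bool" where
  "cond_I D g \<longleftrightarrow> (\<forall>c>0.
     (\<integral>\<^sup>+ t. indicator {0..} t *
        (SUP p \<in> {(i, q). q \<in> D i \<and> norm q \<le> c}. ennreal \<bar>g t (fst p) (snd p)\<bar>) \<partial>lborel) < \<infinity>)"

definition cond_R :: "('n \<Rightarrow> (real^'n) set) \<Rightarrow> (real \<Rightarrow> 'n \<Rightarrow> real^'n \<Rightarrow> real)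
     \<Rightarrow> (real \<Rightarrow> 'n \<Rightarrow> real^'n \<Rightarrow> real) \<Rightarrow> bool" where
  "cond_R D f ft \<longleftrightarrow> (\<exists>r :: real \<Rightarrow> real \<Rightarrow> 'n \<Rightarrow> real^'n \<Rightarrow> real.
     (\<forall>t i q. continuous_on {0<..} (\<lambda>e. r t e i q)) \<and>
     (\<forall>t\<ge>0. \<forall>e>0. \<forall>i. \<forall>q\<in>D i.
        \<bar>f (t + e) i q - f t i q - e * ft t i q\<bar> \<le> r t e i q) \<and>
     (\<forall>i. \<forall>q\<in>D i. \<exists>e0>0. \<forall>e. 0 < e \<and> e < e0 \<longrightarrow>
        (\<integral>\<^sup>+ t. indicator {0..} t * ennreal (r t e i q) \<partial>lborel) < \<infinity>) \<and>
     (\<forall>t i q. mono_on {0<..} (\<lambda>e. r t e i q / e)))"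

text \<open>Expected payoff F(i,Q) = E_{i,Q}[\<integral>_0^\<infinity> f(t,X_t,Q_{X_t}) dt], written through
  the transition probabilities P_t(i,j) = exp(tQ)_{ij} (Fubini).\<close>
definition payoff :: "(real \<Rightarrow> 'n \<Rightarrow> real^'n \<Rightarrow> real) \<Rightarrow> 'n::finite \<Rightarrow> real^'n^'n \<Rightarrow> real" where
  "payoff f i Q = integral {0..} (\<lambda>t. \<Sum>j\<in>UNIV. trans_mat Q t $ i $ j * f t j (Q $ j))"

definition payoff_vec :: "(real \<Rightarrow> 'n \<Rightarrow> real^'n \<Rightarrow> real) \<Rightarrow> real^'n^'n \<Rightarrow> real^'n" where
  "payoff_vec f Q = (\<chi> i. payoff f i Q)"

text \<open>F(i, Q \<otimes>_\<epsilon> Q'): generator Q on [0,\<epsilon>], Q' afterwards.\<close>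
definition payoff_switch :: "(real \<Rightarrow> 'n \<Rightarrow> real^'n \<Rightarrow> real) \<Rightarrow> 'n::finite
     \<Rightarrow> real^'n^'n \<Rightarrow> real \<Rightarrow> real^'n^'n \<Rightarrow> real" where
  "payoff_switch f i Q e Q' =
     integral {0..e} (\<lambda>t. \<Sum>j\<in>UNIV. trans_mat Q t $ i $ j * f t j (Q $ j))
   + integral {e..} (\<lambda>t. \<Sum>j\<in>UNIV. (trans_mat Q e ** trans_mat Q' (t - e)) $ i $ j * f t j (Q' $ j))"

definition Gamma_i :: "(real \<Rightarrow> 'n \<Rightarrow> real^'n \<Rightarrow> real) \<Rightarrow> real^'n^'n \<Rightarrow> 'n \<Rightarrow> real^'n \<Rightarrow> real" where
  "Gamma_i f Qs i q = f 0 i q + q \<bullet> payoff_vec f Qs"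

definition Gamma_vec :: "(real \<Rightarrow> 'n \<Rightarrow> real^'n \<Rightarrow> real) \<Rightarrow> real^'n^'n \<Rightarrow> real^'n^'n \<Rightarrow> real^'n" where
  "Gamma_vec f Qs Q = (\<chi> i. Gamma_i f Qs i (Q $ i))"

definition Lambda :: "(real \<Rightarrow> 'n \<Rightarrow> real^'n \<Rightarrow> real) \<Rightarrow> (real \<Rightarrow> 'n \<Rightarrow> real^'n \<Rightarrow> real)
     \<Rightarrow> real^'n^'n \<Rightarrow> 'n \<Rightarrow> real^'n^'n \<Rightarrow> real" where
  "Lambda f ft Qs i Q = ft 0 i (Q $ i) + (Q $ i) \<bullet> (2 *\<^sub>R payoff_vec ft Qs + Gamma_vec f Qs Q)"

end

theory Submission
  imports Defs "HOL-Real_Asymp.Real_Asymp"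
begin

(* Write P_t = exp(t Qs) and R_t = exp(t Q) for the transition matrices and psi_t, phi_t for the
   vectors of payoff rates f(t, k, Qs_k) and f(t, k, Q_k). Then F(Qs) = int_0^oo P_t psi_t dt, and
   the switched payoff is int_0^e R_t phi_t dt + R_e H(e) with H(e) = int_e^oo P_(t-e) psi_t dt.
   H(e) has no direct expansion, but the semigroup property gives
   F(Qs) = int_0^e P_t psi_t dt + P_e H(e), i.e. H(e) = P_(-e) (F(Qs) - int_0^e P_t psi_t dt).
   Every factor now has an explicit second-order expansion at e = 0 (Taylor series of the
   exponentials, first derivative of the integrands at 0), and multiplying them out gives the
   claim once G(Qs) is eliminated by integrating d/dt (P_t psi_t) over [0, oo):
   G(Qs) = - f(0, _, Qs) - Qs F(Qs). *)

section \<open>Matrix exponential\<close>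

lemma matrix_add_rdistrib: "(B + C) ** A = B ** A + C ** A" for A B C :: "real^'n^'n"
  by (vector matrix_matrix_mult_def sum.distrib[symmetric] field_simps)

lemma matrix_mul_sum: "B ** (\<Sum>x\<in>S. f x) = (\<Sum>x\<in>S. B ** f x)"
  for B :: "real^'n^'n" and f :: "'a \<Rightarrow> real^'n^'n"
  by (induction S rule: infinite_finite_induct) (auto simp: matrix_add_ldistrib)

lemma matrix_mul_scaleR_left: "(c *\<^sub>R A) ** B = c *\<^sub>R (A ** B)" for A B :: "real^'n^'n"
  by (simp add: scalar_matrix_assoc)

lemma matrix_mul_scaleR_right: "A ** (c *\<^sub>R B) = c *\<^sub>R (A ** B)" for A B :: "real^'n^'n"
  by (simp add: matrix_scalar_ac scalar_matrix_assoc)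

lemma mat_1_entry: "mat 1 $ i $ j = (if i = j then 1 else 0 :: real)"
  by (simp add: mat_def)

lemma matrix_mul_entry: "(A ** B) $ i $ j = (\<Sum>l\<in>UNIV. A $ i $ l * B $ l $ j)" for A B :: "real^'n^'n"
  by (simp add: matrix_matrix_mult_def)

lemma matrix_vector_mult_uminus_left: "(- A) *v x = - (A *v x)" for A :: "real^'n^'m"
  by (simp add: matrix_vector_mult_def vec_eq_iff sum_negf)

lemma matrix_vector_mult_uminus_right: "A *v (- x) = - (A *v x)" for A :: "real^'n^'m"
  by (simp add: matrix_vector_mult_def vec_eq_iff sum_negf)

lemma matrix_mul_uminus_uminus: "(- A) ** (- B) = A ** B" for A B :: "real^'n^'n"
  by (simp add: matrix_matrix_mult_def vec_eq_iff)

lemma matrix_vector_mult_nth: "(A *v x) $ i = A $ i \<bullet> x" for A :: "real^'n^'m"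
  by (simp add: matrix_vector_mult_def inner_vec_def)

lemma mat_pow_commute: "A ** B = B ** A \<Longrightarrow> mat_pow A k ** B = B ** mat_pow A k"
  by (induction k) (simp_all, metis matrix_mul_assoc)

lemma mat_pow_scaleR: "mat_pow (c *\<^sub>R A) k = c ^ k *\<^sub>R mat_pow A k"
  by (induction k) (simp_all add: matrix_mul_scaleR_left matrix_mul_scaleR_right)

lemma mat_pow_mat_1: "mat_pow (mat 1) k = mat 1"
  by (induction k) simp_all

definition mat_l1_norm :: "real^'n^'n \<Rightarrow> real" where
  "mat_l1_norm A = (\<Sum>i\<in>UNIV. \<Sum>j\<in>UNIV. \<bar>A $ i $ j\<bar>)"

lemma mat_l1_norm_nonneg: "0 \<le> mat_l1_norm A"
  by (simp add: mat_l1_norm_def sum_nonneg)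

lemma row_l1_le_mat_l1_norm: "(\<Sum>j\<in>UNIV. \<bar>A $ i $ j\<bar>) \<le> mat_l1_norm A"
  unfolding mat_l1_norm_def by (rule member_le_sum) (auto intro: sum_nonneg)

lemma abs_entry_le_mat_l1_norm: "\<bar>A $ i $ j\<bar> \<le> mat_l1_norm A"
  using member_le_sum[of j UNIV "\<lambda>j. \<bar>A $ i $ j\<bar>"] row_l1_le_mat_l1_norm[of A i] by simp

lemma abs_entry_le_norm: "\<bar>A $ i $ j\<bar> \<le> norm (A :: real^'n^'n)"
  using Finite_Cartesian_Product.norm_nth_le[of "A $ i" j] Finite_Cartesian_Product.norm_nth_le[of A i] by simp

lemma norm_le_mat_l1_norm: "norm A \<le> mat_l1_norm A"
proof -
  have "norm A \<le> (\<Sum>i\<in>UNIV. norm (A $ i))"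
    by (simp add: norm_vec_def L2_set_le_sum)
  also have "\<dots> \<le> mat_l1_norm A"
    unfolding mat_l1_norm_def by (rule sum_mono) (rule norm_le_l1_cart)
  finally show ?thesis .
qed

lemma abs_mat_pow_entry_le: "\<bar>mat_pow A k $ i $ j\<bar> \<le> mat_l1_norm A ^ k"
proof (induction k arbitrary: i j)
  case 0
  then show ?case by (simp add: mat_1_entry)
next
  case (Suc k)
  have "\<bar>mat_pow A (Suc k) $ i $ j\<bar> \<le> (\<Sum>l\<in>UNIV. \<bar>A $ i $ l\<bar> * mat_l1_norm A ^ k)"
    by (simp add: matrix_mul_entry, rule order_trans[OF sum_abs])
       (auto intro!: sum_mono mult_left_mono Suc simp: abs_mult)
  also have "\<dots> \<le> mat_l1_norm A * mat_l1_norm A ^ k"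
    unfolding sum_distrib_right[symmetric]
    by (rule mult_right_mono[OF row_l1_le_mat_l1_norm]) (simp add: mat_l1_norm_nonneg)
  finally show ?case by simp
qed

lemma norm_exp_series_term_le:
  "norm ((t ^ k / fact k) *\<^sub>R mat_pow A k) \<le> CARD('n)\<^sup>2 * ((\<bar>t\<bar> * mat_l1_norm A) ^ k / fact k)"
  for A :: "real^'n^'n"
proof -
  have "mat_l1_norm (mat_pow A k) \<le> (\<Sum>i\<in>(UNIV::'n set). \<Sum>j\<in>(UNIV::'n set). mat_l1_norm A ^ k)"
    unfolding mat_l1_norm_def[of "mat_pow A k"] by (intro sum_mono abs_mat_pow_entry_le)
  then have "norm (mat_pow A k) \<le> (\<Sum>i\<in>(UNIV::'n set). \<Sum>j\<in>(UNIV::'n set). mat_l1_norm A ^ k)"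
    using norm_le_mat_l1_norm[of "mat_pow A k"] by linarith
  then have "norm (mat_pow A k) \<le> CARD('n)\<^sup>2 * mat_l1_norm A ^ k"
    by (simp add: power2_eq_square)
  then show ?thesis
    by (simp add: power_abs power_mult_distrib mult_left_mono divide_right_mono mult_ac)
qed

lemma summable_norm_exp_series: "summable (\<lambda>k. norm ((t ^ k / fact k) *\<^sub>R mat_pow A k))"
  for A :: "real^'n^'n"
proof (rule summable_comparison_test')
  show "summable (\<lambda>k. CARD('n)\<^sup>2 * ((\<bar>t\<bar> * mat_l1_norm A) ^ k / fact k))"
    using summable_exp_generic[of "\<bar>t\<bar> * mat_l1_norm A"]
    by (intro summable_mult) (simp add: divide_inverse_commute)
  show "norm (norm ((t ^ k / fact k) *\<^sub>R mat_pow A k)) \<le> CARD('n)\<^sup>2 * ((\<bar>t\<bar> * mat_l1_norm A) ^ k / fact k)" for k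
    using norm_exp_series_term_le[of t k A] by simp
qed

lemma trans_mat_sums: "(\<lambda>k. (t ^ k / fact k) *\<^sub>R mat_pow A k) sums trans_mat A t"
  unfolding trans_mat_def by (rule summable_sums, rule summable_norm_cancel, rule summable_norm_exp_series)

lemma bounded_linear_mat_entry: "bounded_linear (\<lambda>A::real^'n^'n. A $ i $ j)"
  by (rule bounded_linear_compose[OF bounded_linear_vec_nth bounded_linear_vec_nth])

lemma trans_mat_entry_sums: "(\<lambda>k. t ^ k / fact k * mat_pow A k $ i $ j) sums (trans_mat A t $ i $ j)"
  using bounded_linear.sums[OF bounded_linear_mat_entry trans_mat_sums] by simp

lemma trans_mat_entry: "trans_mat A t $ i $ j = (\<Sum>k. t ^ k / fact k * mat_pow A k $ i $ j)"
  by (rule sums_unique[OF trans_mat_entry_sums])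

lemma suminf_matrix_mul_Cauchy:
  fixes a b c :: "nat \<Rightarrow> real^'n^'n"
  assumes a: "summable (\<lambda>k. norm (a k))" and b: "summable (\<lambda>k. norm (b k))"
    and c: "summable c" and c_eq: "\<And>n. c n = (\<Sum>m\<le>n. a m ** b (n - m))"
  shows "suminf a ** suminf b = suminf c"
proof -
  have entry: "suminf x $ i $ j = (\<Sum>k. x k $ i $ j)" if "summable x" for x :: "nat \<Rightarrow> real^'n^'n" and i j
    using bounded_linear.suminf[OF bounded_linear_mat_entry that] by simp
  have "(suminf a ** suminf b) $ i $ j = suminf c $ i $ j" for i j
  proof -
    have Cauchy: "(\<lambda>n. \<Sum>m\<le>n. a m $ i $ l * b (n - m) $ l $ j) sums ((\<Sum>k. a k $ i $ l) * (\<Sum>k. b k $ l $ j))" for l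
      by (rule Cauchy_product_sums)
         (rule summable_comparison_test'[OF a] summable_comparison_test'[OF b], simp add: abs_entry_le_norm)+
    have "(suminf a ** suminf b) $ i $ j = (\<Sum>l\<in>UNIV. (\<Sum>k. a k $ i $ l) * (\<Sum>k. b k $ l $ j))"
      using a b by (simp add: matrix_mul_entry entry summable_norm_cancel)
    also have "\<dots> = (\<Sum>l\<in>UNIV. \<Sum>n. \<Sum>m\<le>n. a m $ i $ l * b (n - m) $ l $ j)"
      using Cauchy sums_unique by (metis (no_types, lifting))
    also have "\<dots> = (\<Sum>n. \<Sum>l\<in>UNIV. \<Sum>m\<le>n. a m $ i $ l * b (n - m) $ l $ j)"
      by (rule suminf_sum[symmetric]) (use Cauchy sums_summable in blast)
    also have "\<dots> = suminf c $ i $ j"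
      by (simp add: entry[OF c] c_eq matrix_mul_entry sum.swap[of _ UNIV])
    finally show ?thesis .
  qed
  then show ?thesis by (simp add: vec_eq_iff)
qed

definition exp_term :: "real^'n^'n \<Rightarrow> nat \<Rightarrow> real^'n^'n" where
  "exp_term A k = (1 / fact k) *\<^sub>R mat_pow A k"

lemma trans_mat_1: "trans_mat A 1 = suminf (exp_term A)"
  by (simp add: trans_mat_def exp_term_def[abs_def])

lemma summable_norm_exp_term: "summable (\<lambda>k. norm (exp_term A k))"
  using summable_norm_exp_series[of 1 A] by (simp add: exp_term_def)

lemma exp_term_add_commuting:
  fixes A B :: "real^'n^'n"
  assumes AB: "A ** B = B ** A"
  shows "exp_term (A + B) n = (\<Sum>m\<le>n. exp_term A m ** exp_term B (n - m))"
proof (induction n)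
  case 0
  show ?case by (simp add: exp_term_def)
next
  case (Suc n)
  have mult_exp_term: "X ** exp_term X k = real (Suc k) *\<^sub>R exp_term X (Suc k)" for X k
    by (simp add: exp_term_def matrix_mul_scaleR_right)
  have exp_term_commute: "exp_term A k ** B = B ** exp_term A k" for k
    by (simp add: exp_term_def matrix_mul_scaleR_left matrix_mul_scaleR_right mat_pow_commute[OF AB])
  have "real (Suc n) *\<^sub>R exp_term (A + B) (Suc n) = (A + B) ** (\<Sum>m\<le>n. exp_term A m ** exp_term B (n - m))"
    using mult_exp_term[of "A + B" n] by (simp add: Suc.IH)
  also have "\<dots> = (\<Sum>m\<le>n. A ** exp_term A m ** exp_term B (n - m))
                + (\<Sum>m\<le>n. exp_term A m ** (B ** exp_term B (n - m)))"
    by (simp add: matrix_add_rdistrib matrix_mul_sum matrix_mul_assoc exp_term_commute sum.distrib)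
  also have "\<dots> = (\<Sum>m\<le>n. real (Suc m) *\<^sub>R (exp_term A (Suc m) ** exp_term B (n - m)))
                + (\<Sum>m\<le>n. real (Suc n - m) *\<^sub>R (exp_term A m ** exp_term B (Suc n - m)))"
    by (simp add: mult_exp_term Suc_diff_le matrix_mul_scaleR_left matrix_mul_scaleR_right)
  also have "\<dots> = (\<Sum>m\<le>Suc n. real m *\<^sub>R (exp_term A m ** exp_term B (Suc n - m)))
                + (\<Sum>m\<le>Suc n. real (Suc n - m) *\<^sub>R (exp_term A m ** exp_term B (Suc n - m)))"
    by (subst sum.atMost_Suc_shift) simp
  also have "\<dots> = (\<Sum>m\<le>Suc n. real (Suc n) *\<^sub>R (exp_term A m ** exp_term B (Suc n - m)))"
    by (simp flip: sum.distrib scaleR_add_left of_nat_add)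
  also have "\<dots> = real (Suc n) *\<^sub>R (\<Sum>m\<le>Suc n. exp_term A m ** exp_term B (Suc n - m))"
    by (simp only: scaleR_right.sum)
  finally show ?case
    by (simp del: sum.cl_ivl_Suc)
qed

lemma trans_mat_add_commuting:
  fixes A B :: "real^'n^'n"
  assumes "A ** B = B ** A"
  shows "trans_mat (A + B) 1 = trans_mat A 1 ** trans_mat B 1"
  unfolding trans_mat_1
  by (rule suminf_matrix_mul_Cauchy[OF summable_norm_exp_term summable_norm_exp_term, symmetric])
     (simp_all add: summable_norm_cancel[OF summable_norm_exp_term] exp_term_add_commuting[OF assms])

lemma trans_mat_scale: "trans_mat A (c * t) = trans_mat (c *\<^sub>R A) t"
  by (simp add: trans_mat_def mat_pow_scaleR power_mult_distrib mult_ac)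

lemma trans_mat_add_time: "trans_mat A (s + t) = trans_mat A s ** trans_mat A t"
  for A :: "real^'n^'n"
proof -
  have "(s *\<^sub>R A) ** (t *\<^sub>R A) = (t *\<^sub>R A) ** (s *\<^sub>R A)"
    by (simp add: matrix_mul_scaleR_left matrix_mul_scaleR_right)
  then show ?thesis
    using trans_mat_scale[of A _ 1] by (simp add: scaleR_add_left trans_mat_add_commuting)
qed

lemma trans_mat_zero: "trans_mat A 0 = mat 1"
proof -
  have "(\<lambda>k. ((0::real) ^ k / fact k) *\<^sub>R mat_pow A k) = (\<lambda>k. if k = 0 then mat_pow A k else 0)"
    by (auto simp: fun_eq_iff)
  then have "(\<lambda>k. ((0::real) ^ k / fact k) *\<^sub>R mat_pow A k) sums mat_pow A 0"
    using sums_single[of 0 "mat_pow A"] by simp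
  then show ?thesis
    unfolding trans_mat_def by (simp add: sums_iff)
qed

lemma trans_mat_uminus_mult: "trans_mat (- A) t ** trans_mat A t = mat 1"
  using trans_mat_scale[of A "- 1" t] trans_mat_add_time[of A "- t" t] by (simp add: trans_mat_zero)

lemma trans_mat_shift:
  "trans_mat (A + c *\<^sub>R mat 1) t = exp (t * c) *\<^sub>R trans_mat A t" for A :: "real^'n^'n"
proof -
  have scalar: "trans_mat (c *\<^sub>R mat 1) 1 = exp c *\<^sub>R (mat 1 :: real^'n^'n)" for c
    using summable_exp_generic[of c]
    by (simp add: trans_mat_def mat_pow_scaleR mat_pow_mat_1 suminf_scaleR_left exp_def
        divide_inverse_commute)
  have "(t *\<^sub>R A) ** ((t * c) *\<^sub>R mat 1) = ((t * c) *\<^sub>R mat 1) ** (t *\<^sub>R A)"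
    by (simp add: matrix_mul_scaleR_left matrix_mul_scaleR_right)
  then have "trans_mat (t *\<^sub>R A + (t * c) *\<^sub>R mat 1) 1 = trans_mat (t *\<^sub>R A) 1 ** (exp (t * c) *\<^sub>R mat 1)"
    by (simp add: trans_mat_add_commuting scalar)
  moreover have "trans_mat X t = trans_mat (t *\<^sub>R X) 1" for X :: "real^'n^'n"
    using trans_mat_scale[of X t 1] by simp
  ultimately show ?thesis
    by (simp add: scaleR_add_right matrix_mul_scaleR_right)
qed

lemma trans_mat_entry_has_derivative:
  fixes A :: "real^'n^'n"
  shows "((\<lambda>s. trans_mat A s $ i $ j) has_real_derivative (A ** trans_mat A t) $ i $ j) (at t)"
proof -
  define c where "c k = mat_pow A k $ i $ j / fact k" for k
  have entry: "trans_mat A s $ i $ j = (\<Sum>k. c k * s ^ k)" for s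
    by (simp add: trans_mat_entry c_def field_simps)
  have "summable (\<lambda>k. c k * s ^ k)" for s
    using sums_summable[OF trans_mat_entry_sums[of s A i j]] by (simp add: c_def field_simps)
  then have "((\<lambda>s. \<Sum>k. c k * s ^ k) has_real_derivative (\<Sum>k. diffs c k * t ^ k)) (at t)"
    by (rule termdiffs_strong_converges_everywhere)
  moreover have "(\<lambda>k. diffs c k * t ^ k) sums (A ** trans_mat A t) $ i $ j"
  proof -
    have "bounded_linear (\<lambda>X::real^'n^'n. (A ** X) $ i $ j)"
      unfolding matrix_mul_entry
      by (intro bounded_linear_sum bounded_linear_compose[OF bounded_linear_mult_right bounded_linear_mat_entry])
    from bounded_linear.sums[OF this trans_mat_sums[of t A]]
    have "(\<lambda>k. (A ** ((t ^ k / fact k) *\<^sub>R mat_pow A k)) $ i $ j) sums (A ** trans_mat A t) $ i $ j" .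
    moreover have "diffs c k * t ^ k = (A ** ((t ^ k / fact k) *\<^sub>R mat_pow A k)) $ i $ j" for k
      by (simp add: diffs_def c_def matrix_mul_scaleR_right)
    ultimately show ?thesis by simp
  qed
  ultimately show ?thesis
    unfolding entry by (metis sums_unique)
qed

lemma trans_mat_taylor:
  fixes A :: "real^'n^'n"
  assumes t: "\<bar>t\<bar> \<le> 1"
  shows "\<bar>trans_mat A t $ i $ j - (mat 1 $ i $ j + t * A $ i $ j + t\<^sup>2 / 2 * (A ** A) $ i $ j)\<bar>
          \<le> \<bar>t\<bar> ^ 3 * (mat_l1_norm A ^ 3 * exp (mat_l1_norm A))"
proof -
  define M where "M = mat_l1_norm A"
  define a where "a k = t ^ k / fact k * mat_pow A k $ i $ j" for k
  have "summable a"
    unfolding a_def by (rule sums_summable[OF trans_mat_entry_sums])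
  then have split: "trans_mat A t $ i $ j = (\<Sum>n. a (n + 3)) + (\<Sum>k<3. a k)"
    unfolding trans_mat_entry a_def[symmetric] by (rule suminf_split_initial_segment)
  have head: "(\<Sum>k<3. a k) = mat 1 $ i $ j + t * A $ i $ j + t\<^sup>2 / 2 * (A ** A) $ i $ j"
    by (simp add: a_def numeral_3_eq_3 numeral_2_eq_2 lessThan_Suc power2_eq_square)
  define b where "b n = \<bar>t\<bar> ^ 3 * (M ^ 3 * (M ^ n / fact n))" for n
  have b_summable: "summable b"
    unfolding b_def using summable_exp_generic[of M]
    by (intro summable_mult) (simp add: divide_inverse_commute)
  have tail_le: "\<bar>a (n + 3)\<bar> \<le> b n" for n
  proof -
    have "\<bar>t\<bar> ^ (n + 3) \<le> \<bar>t\<bar> ^ 3"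
      by (subst power_add) (simp add: mult_left_le_one_le power_le_one t)
    moreover have "fact n \<le> (fact (n + 3) :: real)"
      by (rule fact_mono) simp
    ultimately have "\<bar>t\<bar> ^ (n + 3) / fact (n + 3) \<le> \<bar>t\<bar> ^ 3 / fact n"
      by (intro frac_le) auto
    then have "\<bar>t\<bar> ^ (n + 3) / fact (n + 3) * \<bar>mat_pow A (n + 3) $ i $ j\<bar> \<le> \<bar>t\<bar> ^ 3 / fact n * M ^ (n + 3)"
      by (rule mult_mono) (auto simp: M_def abs_mat_pow_entry_le)
    then show ?thesis
      by (simp add: a_def b_def abs_mult power_abs power_add field_simps)
  qed
  have abs_summable: "summable (\<lambda>n. \<bar>a (n + 3)\<bar>)"
    by (rule summable_comparison_test'[OF b_summable]) (use tail_le in simp)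
  have "\<bar>\<Sum>n. a (n + 3)\<bar> \<le> suminf b"
    by (rule order_trans[OF summable_rabs[OF abs_summable] suminf_le[OF tail_le abs_summable b_summable]])
  also have "suminf b = \<bar>t\<bar> ^ 3 * (M ^ 3 * exp M)"
    unfolding b_def using summable_exp_generic[of M]
    by (simp add: suminf_mult exp_def divide_inverse_commute)
  finally show ?thesis
    using split head by (simp add: M_def)
qed

section \<open>Generator matrices\<close>

definition generator :: "real^'n^'n \<Rightarrow> bool" where
  "generator A \<longleftrightarrow> (\<forall>i j. i \<noteq> j \<longrightarrow> 0 \<le> A $ i $ j) \<and> (\<forall>i. (\<Sum>j\<in>UNIV. A $ i $ j) = 0)"

lemma generator_if_rows_in_E_set:
  assumes "\<And>i. A $ i \<in> E_set i"
  shows "generator A"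
  unfolding generator_def
proof (intro conjI allI impI)
  fix i j
  show "i \<noteq> j \<Longrightarrow> 0 \<le> A $ i $ j"
    using assms[of i] by (simp add: E_set_def)
  show "(\<Sum>j\<in>UNIV. A $ i $ j) = 0"
    using assms[of i] sum.remove[of UNIV i "\<lambda>j. A $ i $ j"] by (simp add: E_set_def)
qed

lemma mat_pow_nonneg: "(\<And>i j. 0 \<le> A $ i $ j) \<Longrightarrow> 0 \<le> mat_pow A k $ i $ j"
  by (induction k arbitrary: i j) (auto simp: mat_1_entry matrix_mul_entry intro!: sum_nonneg)

lemma trans_mat_nonneg_if_nonneg:
  assumes "\<And>i j. 0 \<le> A $ i $ j" and "0 \<le> t"
  shows "0 \<le> trans_mat A t $ i $ j"
  unfolding trans_mat_entry
  by (rule suminf_nonneg[OF sums_summable[OF trans_mat_entry_sums]])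
     (use assms in \<open>auto intro!: divide_nonneg_nonneg mult_nonneg_nonneg mat_pow_nonneg\<close>)

text \<open>A generator plus a large multiple of the identity is entrywise nonnegative, and the shift
  only rescales the exponential by a positive factor.\<close>

lemma generator_trans_mat_nonneg:
  assumes A: "generator A" and t: "0 \<le> t"
  shows "0 \<le> trans_mat A t $ i $ j"
proof -
  define c where "c = mat_l1_norm A"
  have "0 \<le> (A + c *\<^sub>R mat 1) $ i $ j" for i j
    using A abs_entry_le_mat_l1_norm[of A i i] by (auto simp: generator_def mat_1_entry c_def)
  then have "0 \<le> trans_mat (A + c *\<^sub>R mat 1) t $ i $ j"
    by (rule trans_mat_nonneg_if_nonneg[OF _ t])
  moreover have "trans_mat A t = exp (- (t * c)) *\<^sub>R trans_mat (A + c *\<^sub>R mat 1) t"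
    by (simp add: trans_mat_shift exp_minus_inverse[symmetric] exp_add[symmetric])
  ultimately show ?thesis
    by simp
qed

lemma generator_mat_pow_row_sum:
  assumes A: "generator A"
  shows "(\<Sum>j\<in>UNIV. mat_pow A k $ i $ j) = (if k = 0 then 1 else 0)"
proof (induction k arbitrary: i)
  case 0
  then show ?case by (simp add: mat_1_entry)
next
  case (Suc k)
  have "(\<Sum>j\<in>UNIV. mat_pow A (Suc k) $ i $ j) = (\<Sum>l\<in>UNIV. A $ i $ l * (\<Sum>j\<in>UNIV. mat_pow A k $ l $ j))"
    by (simp add: matrix_mul_entry sum_distrib_left) (rule sum.swap)
  also have "\<dots> = 0"
    using A by (simp add: Suc sum_distrib_right[symmetric] generator_def)
  finally show ?case by simp
qed

lemma generator_trans_mat_row_sum: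
  assumes A: "generator A"
  shows "(\<Sum>j\<in>UNIV. trans_mat A t $ i $ j) = 1"
proof -
  have "(\<Sum>j\<in>UNIV. trans_mat A t $ i $ j) = (\<Sum>k. \<Sum>j\<in>UNIV. t ^ k / fact k * mat_pow A k $ i $ j)"
    unfolding trans_mat_entry
    by (rule suminf_sum[symmetric]) (rule sums_summable[OF trans_mat_entry_sums])
  also have "\<dots> = (\<Sum>k. if k = 0 then 1 else 0)"
  proof -
    have "(\<Sum>j\<in>UNIV. t ^ k / fact k * mat_pow A k $ i $ j) = (if k = 0 then 1 else 0)" for k
      by (subst sum_distrib_left[symmetric]) (simp add: generator_mat_pow_row_sum[OF A])
    then show ?thesis by simp
  qed
  also have "\<dots> = 1"
    using sums_single[of 0 "\<lambda>_. 1::real"] by (simp add: sums_iff)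
  finally show ?thesis .
qed

lemma generator_abs_trans_mat_le_1:
  assumes A: "generator A" and t: "0 \<le> t"
  shows "\<bar>trans_mat A t $ i $ j\<bar> \<le> 1"
proof -
  have "trans_mat A t $ i $ j \<le> (\<Sum>j\<in>UNIV. trans_mat A t $ i $ j)"
    by (rule member_le_sum) (use generator_trans_mat_nonneg[OF A t] in auto)
  then show ?thesis
    using generator_trans_mat_row_sum[OF A] generator_trans_mat_nonneg[OF A t, of i j] by simp
qed

section \<open>Second-order expansions at zero from the right\<close>

definition expansion2 :: "(real \<Rightarrow> real) \<Rightarrow> real \<Rightarrow> real \<Rightarrow> real \<Rightarrow> bool" where
  "expansion2 g a b c \<longleftrightarrow> (\<lambda>e. g e - (a + b * e + c * e\<^sup>2)) \<in> o[at_right 0](\<lambda>e. e\<^sup>2)"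

lemma expansion2_cong:
  "eventually (\<lambda>e. g e = h e) (at_right 0) \<Longrightarrow> expansion2 h a b c \<Longrightarrow> expansion2 g a b c"
  unfolding expansion2_def by (rule landau_o.small.in_cong[THEN iffD2]) (auto elim: eventually_mono)

lemma expansion2_const: "expansion2 (\<lambda>_. a) a 0 0"
  by (simp add: expansion2_def)

lemma expansion2_add:
  "expansion2 f a b c \<Longrightarrow> expansion2 g a' b' c' \<Longrightarrow> expansion2 (\<lambda>e. f e + g e) (a + a') (b + b') (c + c')"
  unfolding expansion2_def by (drule (1) sum_in_smallo(1)) (simp add: algebra_simps)

lemma expansion2_diff:
  "expansion2 f a b c \<Longrightarrow> expansion2 g a' b' c' \<Longrightarrow> expansion2 (\<lambda>e. f e - g e) (a - a') (b - b') (c - c')"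
  unfolding expansion2_def by (drule (1) sum_in_smallo(2)) (simp add: algebra_simps)

lemma quadratic_bigo_1: "(\<lambda>e::real. a + b * e + c * e\<^sup>2) \<in> O[at_right 0](\<lambda>_. 1)"
  by (intro sum_in_bigo bigo_const landau_o.big_1_mult'[OF bigo_const]) real_asymp+

lemma expansion2_bigo_1:
  assumes "expansion2 g a b c"
  shows "g \<in> O[at_right 0](\<lambda>_. 1)"
proof -
  have "(\<lambda>e. g e - (a + b * e + c * e\<^sup>2)) \<in> O[at_right 0](\<lambda>_. 1)"
    using assms unfolding expansion2_def
    by (rule landau_o.big_trans[OF landau_o.small_imp_big]) real_asymp
  from sum_in_bigo(1)[OF this quadratic_bigo_1[of a b c]] show ?thesis
    by simp
qed

lemma expansion2_mult:
  assumes f: "expansion2 f a b c" and g: "expansion2 g a' b' c'"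
  shows "expansion2 (\<lambda>e. f e * g e) (a * a') (a * b' + b * a') (a * c' + b * b' + c * a')"
proof -
  define p where "p e = a + b * e + c * e\<^sup>2" for e :: real
  define p' where "p' e = a' + b' * e + c' * e\<^sup>2" for e :: real
  have "(\<lambda>e. f e * (g e - p' e)) \<in> o[at_right 0](\<lambda>e. e\<^sup>2)"
    using landau_o.small_1_mult[OF g[unfolded expansion2_def p'_def[symmetric]] expansion2_bigo_1[OF f]]
    by (simp add: mult.commute)
  moreover have "(\<lambda>e. (f e - p e) * p' e) \<in> o[at_right 0](\<lambda>e. e\<^sup>2)"
    using landau_o.small_1_mult[OF f[unfolded expansion2_def p_def[symmetric]]] quadratic_bigo_1
    by (simp add: p'_def)
  moreover have "(\<lambda>e. (b * c' + c * b') * e ^ 3 + (c * c') * e ^ 4) \<in> o[at_right 0](\<lambda>e. e\<^sup>2)"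
    by real_asymp
  ultimately have "(\<lambda>e. f e * (g e - p' e) + (f e - p e) * p' e
      + ((b * c' + c * b') * e ^ 3 + (c * c') * e ^ 4)) \<in> o[at_right 0](\<lambda>e. e\<^sup>2)"
    by (rule sum_in_smallo(1)[OF sum_in_smallo(1)])
  moreover have "f e * (g e - p' e) + (f e - p e) * p' e + ((b * c' + c * b') * e ^ 3 + (c * c') * e ^ 4)
      = f e * g e - (a * a' + (a * b' + b * a') * e + (a * c' + b * b' + c * a') * e\<^sup>2)" for e
    by (simp add: p_def p'_def algebra_simps power2_eq_square power3_eq_cube power4_eq_xxxx)
  ultimately show ?thesis
    by (simp add: expansion2_def)
qed

lemma expansion2_sum:
  "finite S \<Longrightarrow> (\<And>x. x \<in> S \<Longrightarrow> expansion2 (f x) (a x) (b x) (c x)) \<Longrightarrow>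
    expansion2 (\<lambda>e. \<Sum>x\<in>S. f x e) (\<Sum>x\<in>S. a x) (\<Sum>x\<in>S. b x) (\<Sum>x\<in>S. c x)"
  by (induction S rule: finite_induct) (auto intro: expansion2_add simp: expansion2_const[of 0, simplified])

lemma expansion2_of_cubic_bound:
  assumes "\<And>e. 0 < e \<Longrightarrow> e < 1 \<Longrightarrow> \<bar>g e - (a + b * e + c * e\<^sup>2)\<bar> \<le> K * e ^ 3"
  shows "expansion2 g a b c"
proof -
  have "(\<lambda>e. g e - (a + b * e + c * e\<^sup>2)) \<in> O[at_right 0](\<lambda>e. e ^ 3)"
  proof (rule landau_o.bigI[of "\<bar>K\<bar> + 1"])
    have "eventually (\<lambda>e::real. 0 < e \<and> e < 1) (at_right 0)"
      by (simp add: eventually_at_right_field) (auto intro: exI[of _ 1])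
    then show "\<forall>\<^sub>F e in at_right 0. norm (g e - (a + b * e + c * e\<^sup>2)) \<le> (\<bar>K\<bar> + 1) * norm (e ^ 3)"
    proof eventually_elim
      case (elim e)
      have "\<bar>g e - (a + b * e + c * e\<^sup>2)\<bar> \<le> K * e ^ 3"
        using assms elim by blast
      also have "\<dots> \<le> (\<bar>K\<bar> + 1) * e ^ 3"
        by (rule mult_right_mono) (use elim in auto)
      finally show ?case
        using elim by simp
    qed
  qed simp
  then show ?thesis
    unfolding expansion2_def by (rule landau_o.big_small_trans) real_asymp
qed

lemma expansion2_trans_mat:
  fixes A :: "real^'n^'n"
  shows "expansion2 (\<lambda>e. trans_mat A e $ i $ j) (mat 1 $ i $ j) (A $ i $ j) ((A ** A) $ i $ j / 2)"
proof (rule expansion2_of_cubic_bound)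
  fix e :: real assume "0 < e" "e < 1"
  then show "\<bar>trans_mat A e $ i $ j - (mat 1 $ i $ j + A $ i $ j * e + (A ** A) $ i $ j / 2 * e\<^sup>2)\<bar>
      \<le> mat_l1_norm A ^ 3 * exp (mat_l1_norm A) * e ^ 3"
    using trans_mat_taylor[of e A i j] by (simp add: algebra_simps)
qed

lemma has_integral_affine_Icc:
  fixes a b e :: real
  assumes "0 \<le> e"
  shows "((\<lambda>t. a + b * t) has_integral (a * e + b / 2 * e\<^sup>2)) {0..e}"
proof -
  have "((\<lambda>t. a + b * t) has_integral ((\<lambda>t. a * t + b / 2 * t\<^sup>2) e - (\<lambda>t. a * t + b / 2 * t\<^sup>2) 0)) {0..e}"
    by (rule fundamental_theorem_of_calculus[OF assms])
       (auto intro!: derivative_eq_intros simp flip: has_real_derivative_iff_has_vector_derivative)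
  then show ?thesis by simp
qed

lemma has_real_derivative_at_right_linear_bound:
  fixes g :: "real \<Rightarrow> real"
  assumes deriv: "(g has_real_derivative g1) (at 0 within {0..})" and c: "0 < c"
  obtains d where "0 < d" and "\<And>t. 0 \<le> t \<Longrightarrow> t < d \<Longrightarrow> \<bar>g t - (g 0 + g1 * t)\<bar> \<le> c * t"
proof -
  have "((\<lambda>t. (g t - g 0) / (t - 0)) \<longlongrightarrow> g1) (at 0 within {0..})"
    using deriv by (simp add: has_field_derivative_iff)
  then have "((\<lambda>t. (g t - g 0) / (t - 0)) \<longlongrightarrow> g1) (at_right 0)"
    by (rule tendsto_within_subset) auto
  then have "\<forall>\<^sub>F t in at_right 0. dist ((g t - g 0) / (t - 0)) g1 < c"
    using tendsto_iff[THEN iffD1] c by blast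
  then obtain d where d: "d > 0" and close: "\<And>t. 0 < t \<Longrightarrow> t < d \<Longrightarrow> \<bar>(g t - g 0) / t - g1\<bar> < c"
    unfolding eventually_at_right_field dist_real_def by auto
  have "\<bar>g t - (g 0 + g1 * t)\<bar> \<le> c * t" if "0 \<le> t" "t < d" for t
  proof (cases "t = 0")
    case False
    then have "\<bar>g t - (g 0 + g1 * t)\<bar> = t * \<bar>(g t - g 0) / t - g1\<bar>"
      using that by (simp add: abs_mult[symmetric] field_simps)
    also have "\<dots> \<le> t * c"
      using close[of t] that False by (intro mult_left_mono) auto
    finally show ?thesis by (simp add: mult.commute)
  qed simp
  with d show thesis by (rule that)
qed

lemma expansion2_integral:
  fixes g :: "real \<Rightarrow> real"
  assumes cont: "continuous_on {0..} g" and deriv: "(g has_real_derivative g1) (at 0 within {0..})"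
  shows "expansion2 (\<lambda>e. integral {0..e} g) 0 (g 0) (g1 / 2)"
  unfolding expansion2_def
proof (rule landau_o.smallI)
  fix c :: real assume c: "0 < c"
  obtain d where d: "0 < d" and bound: "\<And>t. 0 \<le> t \<Longrightarrow> t < d \<Longrightarrow> \<bar>g t - (g 0 + g1 * t)\<bar> \<le> c * t"
    using has_real_derivative_at_right_linear_bound[OF deriv c] by blast
  have "eventually (\<lambda>e. 0 < e \<and> e < d) (at_right (0::real))"
    using d by (auto simp: eventually_at_right_field intro: exI[of _ d])
  then show "\<forall>\<^sub>F e in at_right 0. norm (integral {0..e} g - (0 + g 0 * e + g1 / 2 * e\<^sup>2)) \<le> c * norm (e\<^sup>2)"
  proof eventually_elim
    case (elim e)
    have g_integrable: "g integrable_on {0..e}"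
      by (rule integrable_continuous_real, rule continuous_on_subset[OF cont]) auto
    have "integral {0..e} g - (g 0 * e + g1 / 2 * e\<^sup>2) = integral {0..e} (\<lambda>t. g t - (g 0 + g1 * t))"
      using integral_diff[OF g_integrable has_integral_integrable[OF has_integral_affine_Icc]]
        integral_unique[OF has_integral_affine_Icc] elim by simp
    also have "norm \<dots> \<le> integral {0..e} (\<lambda>t. 0 + c * t)"
      using elim bound
      by (intro integral_norm_bound_integral integrable_diff g_integrable
          has_integral_integrable[OF has_integral_affine_Icc]) auto
    also have "\<dots> = c / 2 * e\<^sup>2"
      using integral_unique[OF has_integral_affine_Icc[of e 0 c]] elim by simp
    finally show ?case
      using mult_nonneg_nonneg[OF less_imp_le[OF c] zero_le_power2[of e]] by simp
  qed
qed

definition vec_expansion2 :: "(real \<Rightarrow> real^'n) \<Rightarrow> real^'n \<Rightarrow> real^'n \<Rightarrow> real^'n \<Rightarrow> bool" where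
  "vec_expansion2 v a b c \<longleftrightarrow> (\<forall>k. expansion2 (\<lambda>e. v e $ k) (a $ k) (b $ k) (c $ k))"

lemma vec_expansion2_add:
  "vec_expansion2 v a b c \<Longrightarrow> vec_expansion2 w a' b' c' \<Longrightarrow>
    vec_expansion2 (\<lambda>e. v e + w e) (a + a') (b + b') (c + c')"
  unfolding vec_expansion2_def by (auto intro: expansion2_add)

lemma vec_expansion2_diff:
  "vec_expansion2 v a b c \<Longrightarrow> vec_expansion2 w a' b' c' \<Longrightarrow>
    vec_expansion2 (\<lambda>e. v e - w e) (a - a') (b - b') (c - c')"
  unfolding vec_expansion2_def by (auto intro: expansion2_diff)

lemma vec_expansion2_const: "vec_expansion2 (\<lambda>_. a) a 0 0"
  by (simp add: vec_expansion2_def expansion2_const)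

lemma vec_expansion2_cong:
  assumes "eventually (\<lambda>e. v e = w e) (at_right 0)" and "vec_expansion2 w a b c"
  shows "vec_expansion2 v a b c"
  using assms(2) unfolding vec_expansion2_def
  by (auto intro: expansion2_cong[OF eventually_mono[OF assms(1)]])

lemma vec_expansion2_matrix_vector_mult:
  fixes M :: "real \<Rightarrow> real^'n^'n"
  assumes M: "\<And>j k. expansion2 (\<lambda>e. M e $ j $ k) (A0 $ j $ k) (A1 $ j $ k) (A2 $ j $ k)"
    and v: "vec_expansion2 v x0 x1 x2"
  shows "vec_expansion2 (\<lambda>e. M e *v v e) (A0 *v x0) (A0 *v x1 + A1 *v x0) (A0 *v x2 + A1 *v x1 + A2 *v x0)"
  unfolding vec_expansion2_def
proof
  fix j
  from v have "expansion2 (\<lambda>e. \<Sum>k\<in>UNIV. M e $ j $ k * v e $ k)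
      (\<Sum>k\<in>UNIV. A0 $ j $ k * x0 $ k) (\<Sum>k\<in>UNIV. A0 $ j $ k * x1 $ k + A1 $ j $ k * x0 $ k)
      (\<Sum>k\<in>UNIV. A0 $ j $ k * x2 $ k + A1 $ j $ k * x1 $ k + A2 $ j $ k * x0 $ k)"
    unfolding vec_expansion2_def by (intro expansion2_sum expansion2_mult M) auto
  then show "expansion2 (\<lambda>e. (M e *v v e) $ j) ((A0 *v x0) $ j) ((A0 *v x1 + A1 *v x0) $ j)
      ((A0 *v x2 + A1 *v x1 + A2 *v x0) $ j)"
    by (simp add: matrix_vector_mult_def sum.distrib)
qed

lemma vec_expansion2_trans_mat_mult:
  fixes A :: "real^'n^'n"
  assumes "vec_expansion2 v x0 x1 x2"
  shows "vec_expansion2 (\<lambda>e. trans_mat A e *v v e) x0 (x1 + A *v x0) (x2 + A *v x1 + (1/2) *\<^sub>R ((A ** A) *v x0))"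
proof -
  have "expansion2 (\<lambda>e. trans_mat A e $ j $ k) (mat 1 $ j $ k) (A $ j $ k) (((1/2) *\<^sub>R (A ** A)) $ j $ k)" for j k
    using expansion2_trans_mat[of A j k] by simp
  from vec_expansion2_matrix_vector_mult[OF this assms] show ?thesis
    by (simp add: scaleR_matrix_vector_assoc)
qed

section \<open>Integrability on a half-line\<close>

lemma set_integrable_if_cond_I:
  fixes g :: "real \<Rightarrow> 'n::finite \<Rightarrow> real^'n \<Rightarrow> real"
  assumes I: "cond_I D g" and q: "q \<in> D j" and cont: "continuous_on {0..} (\<lambda>t. g t j q)"
  shows "set_integrable lborel {0..} (\<lambda>t. g t j q)"
  unfolding set_integrable_def
proof (rule integrableI_bounded)
  define S where "S = {(i, q'). q' \<in> D i \<and> norm q' \<le> norm q + 1}"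
  have "norm q + 1 > 0"
    by (simp add: add_nonneg_pos)
  then have finite: "(\<integral>\<^sup>+ t. indicator {0..} t * (SUP p \<in> S. ennreal \<bar>g t (fst p) (snd p)\<bar>) \<partial>lborel) < \<infinity>"
    using I unfolding cond_I_def S_def by blast
  have "(j, q) \<in> S"
    using q by (simp add: S_def)
  then have "ennreal (norm (indicator {0..} t *\<^sub>R g t j q))
      \<le> indicator {0..} t * (SUP p \<in> S. ennreal \<bar>g t (fst p) (snd p)\<bar>)" for t
    using SUP_upper[of "(j, q)" S "\<lambda>p. ennreal \<bar>g t (fst p) (snd p)\<bar>"]
    by (cases "0 \<le> t") (simp_all add: indicator_def)
  then show "(\<integral>\<^sup>+ t. ennreal (norm (indicator {0..} t *\<^sub>R g t j q)) \<partial>lborel) < \<infinity>"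
    by (rule le_less_trans[OF nn_integral_mono finite])
  show "(\<lambda>t. indicator {0..} t *\<^sub>R g t j q) \<in> borel_measurable lborel"
    using borel_measurable_continuous_on_indicator[OF _ cont] by simp
qed

lemma set_integrable_sum:
  fixes f :: "'k \<Rightarrow> real \<Rightarrow> real"
  assumes "\<And>k. k \<in> K \<Longrightarrow> set_integrable lborel S (f k)"
  shows "set_integrable lborel S (\<lambda>t. \<Sum>k\<in>K. f k t)"
proof -
  have "integrable lborel (\<lambda>t. \<Sum>k\<in>K. indicator S t *\<^sub>R f k t)"
    using assms unfolding set_integrable_def by (rule Bochner_Integration.integrable_sum)
  then show ?thesis
    unfolding set_integrable_def by (simp add: sum_distrib_left)
qed

lemma set_integrable_mult_bounded:
  fixes u h :: "real \<Rightarrow> real"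
  assumes h: "set_integrable lborel S h" and S: "S \<in> sets borel"
    and cont: "continuous_on S u" "continuous_on S h" and bounded: "\<And>t. t \<in> S \<Longrightarrow> \<bar>u t\<bar> \<le> 1"
  shows "set_integrable lborel S (\<lambda>t. u t * h t)"
  unfolding set_integrable_def
proof (rule Bochner_Integration.integrable_bound[OF h[unfolded set_integrable_def]])
  show "(\<lambda>t. indicator S t *\<^sub>R (u t * h t)) \<in> borel_measurable lborel"
    using borel_measurable_continuous_on_indicator[OF S continuous_on_mult[OF cont]] by simp
  show "AE t in lborel. norm (indicator S t *\<^sub>R (u t * h t)) \<le> norm (indicator S t *\<^sub>R h t)"
    using bounded by (intro AE_I2) (auto simp: indicator_def abs_mult mult_left_le_one_le)
qed

lemma set_integrable_integrable_on:
  fixes h :: "real \<Rightarrow> real"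
  shows "set_integrable lborel S h \<Longrightarrow> h integrable_on S"
  using set_borel_integral_eq_integral by blast

lemma integral_Icc_tendsto_at_top:
  fixes h :: "real \<Rightarrow> real"
  assumes h: "set_integrable lborel {a..} h"
  shows "((\<lambda>T. integral {a..T} h) \<longlongrightarrow> integral {a..} h) at_top"
proof -
  have "((\<lambda>b. set_lebesgue_integral lborel {a..b} h) \<longlongrightarrow> set_lebesgue_integral lborel {a..} h) at_top"
    by (rule tendsto_set_lebesgue_integral_at_top) (auto simp: h)
  moreover have "set_lebesgue_integral lborel {a..b} h = integral {a..b} h" for b
    by (rule set_borel_integral_eq_integral(2)[OF set_integrable_subset[OF h]]) auto
  ultimately show ?thesis
    using set_borel_integral_eq_integral(2)[OF h] by simp
qed

lemma set_integrable_tendsto_at_top_imp_zero: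
  fixes h :: "real \<Rightarrow> real"
  assumes h: "set_integrable lborel {0..} h" and lim: "(h \<longlongrightarrow> l) at_top"
  shows "l = 0"
proof (rule ccontr)
  assume l: "l \<noteq> 0"
  then have "\<bar>l\<bar> / 2 > 0" by simp
  then have "\<forall>\<^sub>F T in at_top. dist (h T) l < \<bar>l\<bar> / 2"
    using tendsto_iff[THEN iffD1, OF lim] by blast
  then obtain T1 where T1: "\<And>T. T \<ge> T1 \<Longrightarrow> \<bar>h T - l\<bar> < \<bar>l\<bar> / 2"
    unfolding eventually_at_top_linorder dist_real_def by blast
  define T0 where "T0 = max T1 0"
  have T0: "T0 \<ge> 0" by (simp add: T0_def)
  have far: "\<bar>l\<bar> / 2 \<le> \<bar>h T\<bar>" if "T \<ge> T0" for T
    using T1[of T] that by (simp add: T0_def) (smt (verit))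
  have abs_h: "set_integrable lborel {0..} (\<lambda>t. \<bar>h t\<bar>)"
    by (rule set_integrable_abs[OF h])
  define M where "M = integral {0..} (\<lambda>t. \<bar>h t\<bar>)"
  define T where "T = T0 + 2 * (\<bar>M\<bar> + 1) / \<bar>l\<bar>"
  have "T0 \<le> T" using l by (simp add: T_def)
  have "integral {T0..T} (\<lambda>t. \<bar>l\<bar> / 2) \<le> integral {T0..T} (\<lambda>t. \<bar>h t\<bar>)"
    using far T0 by (intro integral_le set_integrable_integrable_on[OF set_integrable_subset[OF abs_h]]) auto
  also have "\<dots> \<le> M"
    unfolding M_def using T0
    by (intro integral_subset_le set_integrable_integrable_on abs_h set_integrable_subset[OF abs_h]) auto
  finally have "(T - T0) * (\<bar>l\<bar> / 2) \<le> M"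
    using \<open>T0 \<le> T\<close> by (simp add: content_real)
  moreover have "(T - T0) * (\<bar>l\<bar> / 2) = \<bar>M\<bar> + 1"
    using l by (simp add: T_def field_simps)
  ultimately show False by linarith
qed

lemma set_integrable_with_derivative_tendsto_zero:
  fixes h h' :: "real \<Rightarrow> real"
  assumes deriv: "\<And>t. 0 \<le> t \<Longrightarrow> (h has_real_derivative h' t) (at t within {0..})"
    and h: "set_integrable lborel {0..} h" and h': "set_integrable lborel {0..} h'"
  shows "(h \<longlongrightarrow> 0) at_top"
proof -
  define l where "l = h 0 + integral {0..} h'"
  have "((\<lambda>T. h 0 + integral {0..T} h') \<longlongrightarrow> l) at_top"
    unfolding l_def by (intro tendsto_add tendsto_const integral_Icc_tendsto_at_top h')
  moreover have ftc: "h 0 + integral {0..T} h' = h T" if T: "0 \<le> T" for T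
  proof -
    have "(h' has_integral (h T - h 0)) {0..T}"
    proof (rule fundamental_theorem_of_calculus[OF T])
      fix x assume "x \<in> {0..T}"
      then have "(h has_real_derivative h' x) (at x within {0..T})"
        by (intro DERIV_subset[OF deriv]) auto
      then show "(h has_vector_derivative h' x) (at x within {0..T})"
        by (simp add: has_real_derivative_iff_has_vector_derivative)
    qed
    then show ?thesis by (simp add: integral_unique)
  qed
  moreover have "eventually (\<lambda>T. h 0 + integral {0..T} h' = h T) at_top"
    using eventually_ge_at_top[of "0::real"] by eventually_elim (rule ftc)
  ultimately have "(h \<longlongrightarrow> l) at_top"
    by (blast intro: Lim_transform_eventually)
  with set_integrable_tendsto_at_top_imp_zero[OF h this] show ?thesis
    by simp
qed

section \<open>Flows of the transition semigroup\<close>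

lemma continuous_on_trans_mat_entry:
  fixes A :: "real^'n^'n"
  shows "continuous_on S (\<lambda>s. trans_mat A (s - e) $ i $ j)"
proof -
  have "isCont (\<lambda>s. trans_mat A s $ i $ j) x" for x
    by (rule DERIV_isCont[OF trans_mat_entry_has_derivative])
  then have "continuous_on UNIV (\<lambda>s. trans_mat A s $ i $ j)"
    by (simp add: continuous_on_eq_continuous_at)
  then show ?thesis
    by (rule continuous_on_compose2[of UNIV _ S "\<lambda>s. s - e", simplified]) (auto intro!: continuous_intros)
qed

lemma flow_has_derivative:
  fixes A :: "real^'n^'n"
  assumes u: "\<And>k. ((\<lambda>s. u s $ k) has_real_derivative u' t $ k) (at t within S)"
  shows "((\<lambda>s. (trans_mat A s *v u s) $ j) has_real_derivative
           (A *v (trans_mat A t *v u t) + trans_mat A t *v u' t) $ j) (at t within S)"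
proof -
  have "((\<lambda>s. \<Sum>k\<in>UNIV. trans_mat A s $ j $ k * u s $ k) has_real_derivative
      (\<Sum>k\<in>UNIV. (A ** trans_mat A t) $ j $ k * u t $ k + trans_mat A t $ j $ k * u' t $ k)) (at t within S)"
    using DERIV_mult[OF has_field_derivative_at_within[OF trans_mat_entry_has_derivative] u]
    by (intro DERIV_sum) (simp add: mult.commute)
  then show ?thesis
    unfolding matrix_vector_mul_assoc by (simp add: matrix_vector_mult_def sum.distrib)
qed

lemma set_integrable_shifted_flow:
  fixes A :: "real^'n^'n" and u :: "real \<Rightarrow> real^'n"
  assumes A: "generator A" and e: "0 \<le> e"
    and u: "\<And>k. set_integrable lborel {0..} (\<lambda>t. u t $ k)" "\<And>k. continuous_on {0..} (\<lambda>t. u t $ k)"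
  shows "set_integrable lborel {e..} (\<lambda>t. (trans_mat A (t - e) *v u t) $ l)"
  unfolding matrix_vector_mult_def vec_lambda_beta
proof (intro set_integrable_sum set_integrable_mult_bounded)
  show "set_integrable lborel {e..} (\<lambda>t. u t $ k)" "continuous_on {e..} (\<lambda>t. u t $ k)" for k
    using e by (auto intro: set_integrable_subset[OF u(1)] continuous_on_subset[OF u(2)])
  show "\<bar>trans_mat A (t - e) $ l $ k\<bar> \<le> 1" if "t \<in> {e..}" for t k
    using that by (intro generator_abs_trans_mat_le_1[OF A]) auto
qed (auto intro: continuous_on_trans_mat_entry)

definition flow_integral :: "real^'n^'n \<Rightarrow> (real \<Rightarrow> real^'n) \<Rightarrow> real set \<Rightarrow> real^'n" where
  "flow_integral A u S = (\<chi> i. integral S (\<lambda>t. (trans_mat A t *v u t) $ i))"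

lemma flow_tendsto_zero:
  fixes A :: "real^'n^'n"
  assumes A: "generator A" and u: "\<And>k. ((\<lambda>t. u t $ k) \<longlongrightarrow> 0) at_top"
  shows "((\<lambda>t. (trans_mat A t *v u t) $ j) \<longlongrightarrow> 0) at_top"
proof (rule Lim_null_comparison)
  show "\<forall>\<^sub>F t in at_top. norm ((trans_mat A t *v u t) $ j) \<le> (\<Sum>k\<in>UNIV. \<bar>u t $ k\<bar>)"
    using eventually_ge_at_top[of "0::real"]
  proof eventually_elim
    case (elim t)
    have "norm ((trans_mat A t *v u t) $ j) \<le> (\<Sum>k\<in>UNIV. \<bar>trans_mat A t $ j $ k * u t $ k\<bar>)"
      unfolding matrix_vector_mult_def real_norm_def vec_lambda_beta by (rule sum_abs)
    also have "\<dots> \<le> (\<Sum>k\<in>UNIV. \<bar>u t $ k\<bar>)"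
      using generator_abs_trans_mat_le_1[OF A elim]
      by (intro sum_mono) (simp add: abs_mult mult_left_le_one_le)
    finally show ?case .
  qed
  show "((\<lambda>t. \<Sum>k\<in>UNIV. \<bar>u t $ k\<bar>) \<longlongrightarrow> 0) at_top"
    using tendsto_sum[of UNIV "\<lambda>k t. \<bar>u t $ k\<bar>" "\<lambda>_. 0"] tendsto_rabs_zero[OF u] by simp
qed

lemma flow_integral_Icc_derivative:
  fixes A :: "real^'n^'n" and u u' :: "real \<Rightarrow> real^'n"
  assumes deriv: "\<And>k t. 0 \<le> t \<Longrightarrow> ((\<lambda>s. u s $ k) has_real_derivative u' t $ k) (at t within {0..})"
    and cont': "\<And>k. continuous_on {0..} (\<lambda>t. u' t $ k)" and T: "0 \<le> T"
  shows "trans_mat A T *v u T - u 0 = A *v flow_integral A u {0..T} + flow_integral A u' {0..T}"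
proof (rule vec_eq_iff[THEN iffD2, rule_format])
  fix j
  have flow_deriv: "((\<lambda>t. (trans_mat A t *v u t) $ l) has_real_derivative
      (A *v (trans_mat A x *v u x) + trans_mat A x *v u' x) $ l) (at x within {0..T})" if "x \<in> {0..T}" for x l
    using that by (intro flow_has_derivative DERIV_subset[OF deriv]) auto
  have "continuous_on {0..T} (\<lambda>t. (trans_mat A t *v u' t) $ l)" for l
    unfolding matrix_vector_mult_def vec_lambda_beta
    using continuous_on_trans_mat_entry[of _ _ 0] continuous_on_subset[OF cont', of "{0..T}"]
    by (intro continuous_on_sum continuous_on_mult) auto
  moreover have "continuous_on {0..T} (\<lambda>t. (trans_mat A t *v u t) $ l)" for l
    by (rule DERIV_continuous_on[OF flow_deriv])
  ultimately have integrable: "(\<lambda>t. (trans_mat A t *v u t) $ l) integrable_on {0..T}"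
    "(\<lambda>t. (trans_mat A t *v u' t) $ l) integrable_on {0..T}" for l
    by (simp_all add: integrable_continuous_real)
  have "((\<lambda>t. (A *v (trans_mat A t *v u t) + trans_mat A t *v u' t) $ j) has_integral
      ((trans_mat A T *v u T) $ j - (trans_mat A 0 *v u 0) $ j)) {0..T}"
    using flow_deriv by (intro fundamental_theorem_of_calculus[OF T])
      (simp flip: has_real_derivative_iff_has_vector_derivative)
  moreover have "(\<lambda>t. (A *v (trans_mat A t *v u t) + trans_mat A t *v u' t) $ j)
      = (\<lambda>t. (\<Sum>l\<in>UNIV. A $ j $ l * (trans_mat A t *v u t) $ l) + (trans_mat A t *v u' t) $ j)"
    by (simp add: matrix_vector_mult_def[of A])
  ultimately have "(trans_mat A T *v u T) $ j - u 0 $ j = integral {0..T}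
      (\<lambda>t. (\<Sum>l\<in>UNIV. A $ j $ l * (trans_mat A t *v u t) $ l) + (trans_mat A t *v u' t) $ j)"
    by (simp add: trans_mat_zero integral_unique)
  also have "\<dots> = (\<Sum>l\<in>UNIV. A $ j $ l * integral {0..T} (\<lambda>t. (trans_mat A t *v u t) $ l))
      + integral {0..T} (\<lambda>t. (trans_mat A t *v u' t) $ j)"
  proof -
    have "(\<lambda>t. A $ j $ l * (trans_mat A t *v u t) $ l) integrable_on {0..T}" for l
      using integrable_cmul[OF integrable(1), of "A $ j $ l"] by simp
    then show ?thesis
      using integrable(2) by (simp add: integral_add integral_sum integrable_sum)
  qed
  finally show "(trans_mat A T *v u T - u 0) $ j = (A *v flow_integral A u {0..T} + flow_integral A u' {0..T}) $ j"
    by (simp add: flow_integral_def matrix_vector_mult_def[of A])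
qed

lemma flow_integral_derivative:
  fixes A :: "real^'n^'n" and u u' :: "real \<Rightarrow> real^'n"
  assumes A: "generator A"
    and deriv: "\<And>k t. 0 \<le> t \<Longrightarrow> ((\<lambda>s. u s $ k) has_real_derivative u' t $ k) (at t within {0..})"
    and cont': "\<And>k. continuous_on {0..} (\<lambda>t. u' t $ k)"
    and int: "\<And>k. set_integrable lborel {0..} (\<lambda>t. u t $ k)"
    and int': "\<And>k. set_integrable lborel {0..} (\<lambda>t. u' t $ k)"
  shows "flow_integral A u' {0..} = - u 0 - A *v flow_integral A u {0..}"
proof (rule vec_eq_iff[THEN iffD2, rule_format])
  fix j
  have cont: "continuous_on {0..} (\<lambda>t. u t $ k)" for k
    by (rule DERIV_continuous_on[OF deriv]) simp
  have flow_int: "set_integrable lborel {0..} (\<lambda>t. (trans_mat A t *v u t) $ l)"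
    and flow_int': "set_integrable lborel {0..} (\<lambda>t. (trans_mat A t *v u' t) $ l)" for l
    using set_integrable_shifted_flow[OF A order_refl int cont]
      set_integrable_shifted_flow[OF A order_refl int' cont'] by simp_all
  have "((\<lambda>T. (trans_mat A T *v u T) $ j - u 0 $ j) \<longlongrightarrow> 0 - u 0 $ j) at_top"
    using set_integrable_with_derivative_tendsto_zero[OF deriv int int']
    by (intro tendsto_diff tendsto_const flow_tendsto_zero[OF A])
  moreover have "eventually (\<lambda>T. (trans_mat A T *v u T) $ j - u 0 $ j
      = (A *v flow_integral A u {0..T}) $ j + flow_integral A u' {0..T} $ j) at_top"
    using eventually_ge_at_top[of "0::real"]
    by eventually_elim (simp add: flow_integral_Icc_derivative[OF deriv cont'] flip: vector_minus_component)
  ultimately have lim_boundary: "((\<lambda>T. (A *v flow_integral A u {0..T}) $ j + flow_integral A u' {0..T} $ j)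
      \<longlongrightarrow> 0 - u 0 $ j) at_top"
    by (rule Lim_transform_eventually)
  have lim_integral: "((\<lambda>T. (A *v flow_integral A u {0..T}) $ j + flow_integral A u' {0..T} $ j)
      \<longlongrightarrow> (A *v flow_integral A u {0..}) $ j + flow_integral A u' {0..} $ j) at_top"
    unfolding flow_integral_def matrix_vector_mult_def[of A] vec_lambda_beta
    by (intro tendsto_intros integral_Icc_tendsto_at_top flow_int flow_int')
  have "0 - u 0 $ j = (A *v flow_integral A u {0..}) $ j + flow_integral A u' {0..} $ j"
    by (rule tendsto_unique[OF _ lim_boundary lim_integral]) simp
  then show "flow_integral A u' {0..} $ j = (- u 0 - A *v flow_integral A u {0..}) $ j"
    by simp
qed

definition tail_flow_integral :: "real^'n^'n \<Rightarrow> (real \<Rightarrow> real^'n) \<Rightarrow> real \<Rightarrow> real^'n" where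
  "tail_flow_integral A u e = (\<chi> l. integral {e..} (\<lambda>t. (trans_mat A (t - e) *v u t) $ l))"

lemma integral_tail_flow:
  fixes A M :: "real^'n^'n"
  assumes A: "generator A" and e: "0 \<le> e"
    and u: "\<And>k. set_integrable lborel {0..} (\<lambda>t. u t $ k)" "\<And>k. continuous_on {0..} (\<lambda>t. u t $ k)"
  shows "integral {e..} (\<lambda>t. ((M ** trans_mat A (t - e)) *v u t) $ i) = (M *v tail_flow_integral A u e) $ i"
proof -
  have "(\<lambda>t. M $ i $ l * (trans_mat A (t - e) *v u t) $ l) integrable_on {e..}" for l
    using integrable_cmul[OF set_integrable_integrable_on[OF set_integrable_shifted_flow[OF A e u]]]
    by simp
  then show ?thesis
    by (simp add: matrix_vector_mul_assoc[symmetric] matrix_vector_mult_def[of M]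
        tail_flow_integral_def integral_sum)
qed

lemma flow_integral_split:
  fixes A :: "real^'n^'n"
  assumes A: "generator A" and e: "0 \<le> e"
    and u: "\<And>k. set_integrable lborel {0..} (\<lambda>t. u t $ k)" "\<And>k. continuous_on {0..} (\<lambda>t. u t $ k)"
  shows "flow_integral A u {0..} = flow_integral A u {0..e} + trans_mat A e *v tail_flow_integral A u e"
proof (rule vec_eq_iff[THEN iffD2, rule_format])
  fix j
  define g where "g t = (trans_mat A t *v u t) $ j" for t
  have g: "set_integrable lborel {0..} g"
    unfolding g_def using set_integrable_shifted_flow[OF A order_refl u] by simp
  have "{0..e} \<inter> {e..} = {e}"
    using e by auto
  then have "(g has_integral (integral {0..e} g + integral {e..} g)) ({0..e} \<union> {e..})"
    using e
    by (intro has_integral_Un integrable_integral set_integrable_integrable_on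
        set_integrable_subset[OF g]) auto
  moreover have "{0..e} \<union> {e..} = {0::real..}"
    using e by auto
  moreover have "integral {e..} g = integral {e..} (\<lambda>t. ((trans_mat A e ** trans_mat A (t - e)) *v u t) $ j)"
    by (rule integral_cong) (simp add: g_def trans_mat_add_time[symmetric])
  ultimately show "flow_integral A u {0..} $ j = (flow_integral A u {0..e} + trans_mat A e *v tail_flow_integral A u e) $ j"
    by (simp add: flow_integral_def g_def[symmetric] integral_unique integral_tail_flow[OF A e u])
qed

lemma tail_flow_integral_eq:
  fixes A :: "real^'n^'n"
  assumes A: "generator A" and e: "0 \<le> e"
    and u: "\<And>k. set_integrable lborel {0..} (\<lambda>t. u t $ k)" "\<And>k. continuous_on {0..} (\<lambda>t. u t $ k)"
  shows "tail_flow_integral A u e = trans_mat (- A) e *v (flow_integral A u {0..} - flow_integral A u {0..e})"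
  by (simp add: flow_integral_split[OF A e u] matrix_vector_mul_assoc trans_mat_uminus_mult)

lemma vec_expansion2_flow_integral:
  fixes A :: "real^'n^'n"
  assumes deriv: "\<And>k t. 0 \<le> t \<Longrightarrow> ((\<lambda>s. u s $ k) has_real_derivative u' t $ k) (at t within {0..})"
  shows "vec_expansion2 (\<lambda>e. flow_integral A u {0..e}) 0 (u 0) ((1/2) *\<^sub>R (A *v u 0 + u' 0))"
  unfolding vec_expansion2_def flow_integral_def vec_lambda_beta
proof
  fix k
  have "((\<lambda>s. (trans_mat A s *v u s) $ k) has_real_derivative
      (A *v (trans_mat A t *v u t) + trans_mat A t *v u' t) $ k) (at t within {0..})" if "0 \<le> t" for t
    using deriv[OF that] by (rule flow_has_derivative)
  then have "expansion2 (\<lambda>e. integral {0..e} (\<lambda>t. (trans_mat A t *v u t) $ k)) 0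
      ((trans_mat A 0 *v u 0) $ k) ((A *v (trans_mat A 0 *v u 0) + trans_mat A 0 *v u' 0) $ k / 2)"
    by (intro expansion2_integral DERIV_continuous_on) auto
  then show "expansion2 (\<lambda>e. integral {0..e} (\<lambda>t. (trans_mat A t *v u t) $ k)) (0 $ k) (u 0 $ k)
      (((1/2) *\<^sub>R (A *v u 0 + u' 0)) $ k)"
    by (simp add: trans_mat_zero)
qed

lemma switch_flow_expansion:
  fixes Q Qs :: "real^'n^'n" and phi phi' psi psi' :: "real \<Rightarrow> real^'n"
  assumes Qs: "generator Qs"
    and phi: "\<And>k t. 0 \<le> t \<Longrightarrow> ((\<lambda>s. phi s $ k) has_real_derivative phi' t $ k) (at t within {0..})"
    and psi: "\<And>k t. 0 \<le> t \<Longrightarrow> ((\<lambda>s. psi s $ k) has_real_derivative psi' t $ k) (at t within {0..})"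
    and int: "\<And>k. set_integrable lborel {0..} (\<lambda>t. psi t $ k)"
  defines "F \<equiv> flow_integral Qs psi {0..}"
  shows "vec_expansion2 (\<lambda>e. F - (flow_integral Q phi {0..e} + trans_mat Q e *v tail_flow_integral Qs psi e))
     0 (psi 0 + Qs *v F - phi 0 - Q *v F)
     ((1/2) *\<^sub>R (psi' 0 - phi' 0 - Qs *v psi 0 - Q *v phi 0 + 2 *\<^sub>R (Q *v psi 0)
        - (Qs ** Qs) *v F + 2 *\<^sub>R ((Q ** Qs) *v F) - (Q ** Q) *v F))"
proof -
  have cont: "continuous_on {0..} (\<lambda>t. psi t $ k)" for k
    by (rule DERIV_continuous_on[OF psi]) simp
  have tail: "eventually (\<lambda>e. F - (flow_integral Q phi {0..e} + trans_mat Q e *v tail_flow_integral Qs psi e)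
      = F - (flow_integral Q phi {0..e}
             + trans_mat Q e *v (trans_mat (- Qs) e *v (F - flow_integral Qs psi {0..e})))) (at_right 0)"
    unfolding F_def using tail_flow_integral_eq[OF Qs _ int cont]
    by (auto simp: eventually_at_right_field intro: exI[of _ 1])
  have expansion: "vec_expansion2 (\<lambda>e. F - (flow_integral Q phi {0..e}
      + trans_mat Q e *v (trans_mat (- Qs) e *v (F - flow_integral Qs psi {0..e}))))
     (F - (0 + (F - 0)))
     (0 - (phi 0 + ((0 - psi 0 + - Qs *v (F - 0)) + Q *v (F - 0))))
     (0 - ((1/2) *\<^sub>R (Q *v phi 0 + phi' 0)
       + ((0 - (1/2) *\<^sub>R (Qs *v psi 0 + psi' 0) + - Qs *v (0 - psi 0) + (1/2) *\<^sub>R ((- Qs ** - Qs) *v (F - 0)))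
          + Q *v (0 - psi 0 + - Qs *v (F - 0)) + (1/2) *\<^sub>R ((Q ** Q) *v (F - 0)))))"
    (is "vec_expansion2 _ ?a ?b ?c")
    by (intro vec_expansion2_diff vec_expansion2_add vec_expansion2_const vec_expansion2_trans_mat_mult
        vec_expansion2_flow_integral phi psi)
  have "?a = 0"
    by simp
  moreover have "?b = psi 0 + Qs *v F - phi 0 - Q *v F"
    by (simp add: matrix_vector_mult_uminus_left)
  moreover have "?c = (1/2) *\<^sub>R (psi' 0 - phi' 0 - Qs *v psi 0 - Q *v phi 0 + 2 *\<^sub>R (Q *v psi 0)
        - (Qs ** Qs) *v F + 2 *\<^sub>R ((Q ** Qs) *v F) - (Q ** Q) *v F)"
    by (simp add: algebra_simps matrix_vector_mult_uminus_left matrix_vector_mult_uminus_right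
        matrix_mul_uminus_uminus matrix_vector_mul_assoc[symmetric])
  ultimately show ?thesis
    using vec_expansion2_cong[OF tail expansion] by (simp only:)
qed

section \<open>Payoffs under a switch of generator\<close>

definition payoff_rate :: "(real \<Rightarrow> 'n \<Rightarrow> real^'n \<Rightarrow> real) \<Rightarrow> real^'n^'n \<Rightarrow> real \<Rightarrow> real^'n" where
  "payoff_rate f Q t = (\<chi> k. f t k (Q $ k))"

lemma payoff_vec_eq_flow_integral: "payoff_vec f Q = flow_integral Q (payoff_rate f Q) {0..}"
  by (simp add: payoff_vec_def payoff_def flow_integral_def matrix_vector_mult_def payoff_rate_def)

lemma payoff_switch_eq_flow_integrals:
  fixes Q Qs :: "real^'n^'n"
  assumes "generator Qs" and "0 \<le> e"
    and "\<And>k. set_integrable lborel {0..} (\<lambda>t. f t k (Qs $ k))" "\<And>k. continuous_on {0..} (\<lambda>t. f t k (Qs $ k))"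
  shows "payoff_switch f i Q e Qs
     = (flow_integral Q (payoff_rate f Q) {0..e} + trans_mat Q e *v tail_flow_integral Qs (payoff_rate f Qs) e) $ i"
  using integral_tail_flow[of Qs e "payoff_rate f Qs" "trans_mat Q e" i] assms
  by (simp add: payoff_switch_def flow_integral_def matrix_vector_mult_def payoff_rate_def)

lemma payoff_vec_time_derivative:
  fixes Qs :: "real^'n^'n"
  assumes Qs: "generator Qs"
    and deriv: "\<And>k t. 0 \<le> t \<Longrightarrow> ((\<lambda>s. f s k (Qs $ k)) has_real_derivative ft t k (Qs $ k)) (at t within {0..})"
    and cont: "\<And>k. continuous_on {0..} (\<lambda>t. ft t k (Qs $ k))"
    and int: "\<And>k. set_integrable lborel {0..} (\<lambda>t. f t k (Qs $ k))"
    and int': "\<And>k. set_integrable lborel {0..} (\<lambda>t. ft t k (Qs $ k))"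
  shows "payoff_vec ft Qs = - payoff_rate f Qs 0 - Qs *v payoff_vec f Qs"
  unfolding payoff_vec_eq_flow_integral
  by (rule flow_integral_derivative[OF Qs]) (simp_all add: payoff_rate_def deriv cont int int')

lemma Gamma_vec_eq: "Gamma_vec f Qs Q = payoff_rate f Q 0 + Q *v payoff_vec f Qs"
  by (simp add: Gamma_vec_def Gamma_i_def payoff_rate_def vec_eq_iff matrix_vector_mult_nth)

lemma Lambda_eq:
  "Lambda f ft Qs i Q = (payoff_rate ft Q 0 + Q *v (2 *\<^sub>R payoff_vec ft Qs + Gamma_vec f Qs Q)) $ i"
  by (simp add: Lambda_def payoff_rate_def matrix_vector_mult_nth)

lemma payoff_switch_expansion:
  fixes Q Qs :: "real^'n^'n"
  assumes Qs: "generator Qs"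
    and deriv_Q: "\<And>k t. 0 \<le> t \<Longrightarrow> ((\<lambda>s. f s k (Q $ k)) has_real_derivative ft t k (Q $ k)) (at t within {0..})"
    and deriv_Qs: "\<And>k t. 0 \<le> t \<Longrightarrow> ((\<lambda>s. f s k (Qs $ k)) has_real_derivative ft t k (Qs $ k)) (at t within {0..})"
    and int: "\<And>k. set_integrable lborel {0..} (\<lambda>t. f t k (Qs $ k))"
    and G: "payoff_vec ft Qs = - payoff_rate f Qs 0 - Qs *v payoff_vec f Qs"
  shows "expansion2 (\<lambda>e. payoff f i Qs - payoff_switch f i Q e Qs) 0
     (Gamma_i f Qs i (Qs $ i) - Gamma_i f Qs i (Q $ i))
     ((1/2) * (Lambda f ft Qs i Qs - Lambda f ft Qs i Q))"
proof -
  define F psi psi' phi phi' where "F = payoff_vec f Qs"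
    and "psi = payoff_rate f Qs" and "psi' = payoff_rate ft Qs"
    and "phi = payoff_rate f Q" and "phi' = payoff_rate ft Q"
  have cont: "continuous_on {0..} (\<lambda>t. f t k (Qs $ k))" for k
    by (rule DERIV_continuous_on[OF deriv_Qs]) simp
  have "eventually (\<lambda>e. payoff f i Qs - payoff_switch f i Q e Qs
      = (F - (flow_integral Q phi {0..e} + trans_mat Q e *v tail_flow_integral Qs psi e)) $ i) (at_right 0)"
    using payoff_switch_eq_flow_integrals[where f = f and Qs = Qs, OF Qs _ int cont]
    by (auto simp: eventually_at_right_field F_def payoff_vec_def phi_def psi_def intro!: exI[of _ 1])
  moreover have "vec_expansion2 (\<lambda>e. F - (flow_integral Q phi {0..e} + trans_mat Q e *v tail_flow_integral Qs psi e))
     0 (psi 0 + Qs *v F - phi 0 - Q *v F)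
     ((1/2) *\<^sub>R (psi' 0 - phi' 0 - Qs *v psi 0 - Q *v phi 0 + 2 *\<^sub>R (Q *v psi 0)
        - (Qs ** Qs) *v F + 2 *\<^sub>R ((Q ** Qs) *v F) - (Q ** Q) *v F))"
    (is "vec_expansion2 _ _ ?b ?c")
    unfolding F_def payoff_vec_eq_flow_integral psi_def
    using int deriv_Q deriv_Qs
    by (intro switch_flow_expansion[OF Qs]) (simp_all add: payoff_rate_def phi_def psi'_def phi'_def)
  ultimately have "expansion2 (\<lambda>e. payoff f i Qs - payoff_switch f i Q e Qs) 0 (?b $ i) (?c $ i)"
    unfolding vec_expansion2_def by (auto intro: expansion2_cong)
  moreover have "?b $ i = Gamma_i f Qs i (Qs $ i) - Gamma_i f Qs i (Q $ i)"
    by (simp add: Gamma_i_def F_def psi_def phi_def payoff_rate_def matrix_vector_mult_nth)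
  moreover have "?c $ i = (1/2) * (Lambda f ft Qs i Qs - Lambda f ft Qs i Q)"
    unfolding Lambda_eq G Gamma_vec_eq F_def[symmetric]
    by (simp add: psi_def psi'_def phi_def phi'_def algebra_simps matrix_vector_mul_assoc)
  ultimately show ?thesis
    by (simp only:)
qed

theorem mainTheorem3:
  fixes D :: "'n::finite \<Rightarrow> (real^'n) set"
    and f ft :: "real \<Rightarrow> 'n \<Rightarrow> real^'n \<Rightarrow> real"
    and i :: 'n and Q Qs :: "real^'n^'n"
  assumes D_sub: "\<And>j. D j \<subseteq> E_set j"
    and I_f: "cond_I D f"
    and deriv: "\<And>t j q. t \<ge> 0 \<Longrightarrow> q \<in> D j \<Longrightarrow>
                  ((\<lambda>s. f s j q) has_real_derivative ft t j q) (at t within {0..})"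
    and cont: "\<And>j q. q \<in> D j \<Longrightarrow> continuous_on {0..} (\<lambda>t. ft t j q)"
    and I_ft: "cond_I D ft"
    and R: "cond_R D f ft"
    and Q: "admissible D Q" and Qs: "admissible D Qs"
  shows "(\<lambda>e. payoff f i Qs - payoff_switch f i Q e Qs
            - ((Gamma_i f Qs i (Qs $ i) - Gamma_i f Qs i (Q $ i)) * e
               + (1/2) * (Lambda f ft Qs i Qs - Lambda f ft Qs i Q) * e\<^sup>2))
         \<in> o[at_right 0](\<lambda>e. e\<^sup>2)"
proof -
  have rows: "Q $ j \<in> D j" "Qs $ j \<in> D j" for j
    using Q Qs by (auto simp: admissible_def)
  then have gen: "generator Qs"
    using D_sub by (blast intro: generator_if_rows_in_E_set)
  have int: "set_integrable lborel {0..} (\<lambda>t. f t k (Qs $ k))"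
    and int': "set_integrable lborel {0..} (\<lambda>t. ft t k (Qs $ k))" for k
    using set_integrable_if_cond_I[OF I_f rows(2) DERIV_continuous_on[OF deriv[OF _ rows(2)]]]
      set_integrable_if_cond_I[OF I_ft rows(2) cont[OF rows(2)]] by auto
  have "payoff_vec ft Qs = - payoff_rate f Qs 0 - Qs *v payoff_vec f Qs"
    by (rule payoff_vec_time_derivative[where f = f and ft = ft, OF gen deriv[OF _ rows(2)] cont[OF rows(2)] int int'])
  from payoff_switch_expansion[where f = f and ft = ft, OF gen deriv[OF _ rows(1)] deriv[OF _ rows(2)] int this]
  show ?thesis
    by (simp add: expansion2_def)
qed

end
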